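(* Let $4\le p\le n-1$ and let $j\in\{1,\dots,n-1\}$ be an internal node. The degree constraint $x(\delta^+(j))\le 1$ is valid for $P^p_{0,n}(D)$ and defines a facet of $P^p_{0,n}(D)$.
   Context: Let $n$ be a positive integer, $V=\{0,1,\dots,n\}$, and let $D=(V,A)$ be the digraph whose arc set $A$ consists of all ordered pairs $(i,j)$ with $i\neq j$, $i,j\in V$, except that no arc enters node $0$, no arc leaves node $n$, and the arc $(0,n)$ is absent. Nodes $1,\dots,n-1$ are internal nodes. A $(0,n)$-$p$-path is a simple directed path in $D$ from $0$ to $n$ with exactly $p$ arcs. $P^p_{0,n}(D)\subseteq\mathbb{R}^A$ is the convex hull of the incidence vectors of all $(0,n)$-$p$-paths. For $F\subseteq A$, $x(F)=\sum_{(i,j)\in F}x_{ij}$; $\delta^+(k)$ ($\delta^-(k)$) is the set of arcs of $A$ leaving (entering) node $k$. Facet defining means valid and defining a face of dimension $\dim P^p_{0,n}(D)-1$. *)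

theory Defs
  imports Complex_Main
begin

(* Points of R^A are represented as functions (nat \<times> nat) \<Rightarrow> real; coordinates outside
   the arc set A are irrelevant (all points considered vanish there). *)
type_synonym point = "nat \<times> nat \<Rightarrow> real"

definition arcs :: "nat \<Rightarrow> (nat \<times> nat) set" where
  "arcs n = {(i,j). i \<le> n \<and> j \<le> n \<and> i \<noteq> j \<and> j \<noteq> 0 \<and> i \<noteq> n \<and> (i,j) \<noteq> (0,n)}"

definition is_p_path :: "nat \<Rightarrow> nat \<Rightarrow> nat list \<Rightarrow> bool" where
  "is_p_path n p vs \<longleftrightarrow> length vs = p + 1 \<and> distinct vs \<and> hd vs = 0 \<and> last vs = n \<and>
     (\<forall>i<p. (vs ! i, vs ! Suc i) \<in> arcs n)"

definition path_arcs :: "nat list \<Rightarrow> (nat \<times> nat) set" where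
  "path_arcs vs = set (zip vs (tl vs))"

definition incidence :: "(nat \<times> nat) set \<Rightarrow> point" where
  "incidence F = (\<lambda>a. if a \<in> F then 1 else 0)"

definition conv_hull :: "point set \<Rightarrow> point set" where
  "conv_hull S = {x. \<exists>(k::nat) c v. (\<forall>i<k. c i \<ge> (0::real) \<and> v i \<in> S) \<and>
                         (\<Sum>i<k. c i) = 1 \<and> x = (\<lambda>a. \<Sum>i<k. c i * v i a)}"

definition path_polytope :: "nat \<Rightarrow> nat \<Rightarrow> point set" where
  "path_polytope n p = conv_hull {incidence (path_arcs vs) | vs. is_p_path n p vs}"

definition xsum :: "point \<Rightarrow> (nat \<times> nat) set \<Rightarrow> real" where
  "xsum x F = (\<Sum>a\<in>F. x a)"

definition delta_out :: "nat \<Rightarrow> nat \<Rightarrow> (nat \<times> nat) set" where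
  "delta_out n k = {a \<in> arcs n. fst a = k}"

definition delta_in :: "nat \<Rightarrow> nat \<Rightarrow> (nat \<times> nat) set" where
  "delta_in n k = {a \<in> arcs n. snd a = k}"

definition aff_indep :: "nat \<Rightarrow> (nat \<Rightarrow> point) \<Rightarrow> bool" where
  "aff_indep k v \<longleftrightarrow> (\<forall>c::nat \<Rightarrow> real. (\<Sum>i\<le>k. c i) = 0 \<and> (\<forall>a. (\<Sum>i\<le>k. c i * v i a) = 0)
                        \<longrightarrow> (\<forall>i\<le>k. c i = 0))"

definition adim :: "point set \<Rightarrow> int" where
  "adim S = (if S = {} then -1
             else int (GREATEST k. \<exists>v. (\<forall>i\<le>k. v i \<in> S) \<and> aff_indep k v))"

definition facet_defining :: "point set \<Rightarrow> (nat \<times> nat) set \<Rightarrow> real \<Rightarrow> bool" where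
  "facet_defining P F b \<longleftrightarrow> (\<forall>x\<in>P. xsum x F \<le> b) \<and>
     adim {x \<in> P. xsum x F = b} = adim P - 1"

end

theory Submission
  imports Defs "HOL-Library.Function_Algebras"
begin

(* A (0,n)-p-path leaves j at most once, so its incidence vector satisfies x(delta+(j)) <= 1, and
   so does every convex combination.

   For the facet, fix a path x0 through j and a path y avoiding j. The paths through j lie on the
   face, and the key claim is that for any two paths s, y avoiding j the difference s - y lies in
   the span of the differences t - x0 of paths t through j. Dually: a linear functional vanishing
   on these differences is an arc weighting w under which all p-paths through j have the same
   weight. Exchanging a single internal vertex of such paths (possible since p >= 4 and there are
   at least three internal nodes besides j) shows that w(x,z) = c + w(0,z) - w(0,x) for distinct
   internal nodes x, z other than j, and that w(0,x) + w(x,n) does not depend on x. Telescoping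
   then gives all p-paths avoiding j the same weight. Hence every vertex minus x0 lies in the span
   of the face directions together with y - x0, which the inequality separates from the face, so
   the affine dimensions of face and polytope differ by exactly one. *)

section \<open>Points as a real vector space\<close>

(* The additive group structure of points is the pointwise one from Function_Algebras. *)
definition scale_point :: "real \<Rightarrow> point \<Rightarrow> point" where
  "scale_point r x = (\<lambda>a. r * x a)"

lemma scale_point_apply [simp]: "scale_point r x a = r * x a"
  by (simp add: scale_point_def)

interpretation V: vector_space scale_point
  by unfold_locales (auto simp: scale_point_def fun_eq_iff algebra_simps)

interpretation R: vector_space "(*) :: real \<Rightarrow> real \<Rightarrow> real"
  by unfold_locales (auto simp: algebra_simps)

interpretation VR: vector_space_pair scale_point "(*) :: real \<Rightarrow> real \<Rightarrow> real" ..

abbreviation linear_functional :: "(point \<Rightarrow> real) \<Rightarrow> bool" where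
  "linear_functional \<equiv> Vector_Spaces.linear scale_point (*)"

lemma sum_apply: "(\<Sum>i\<in>S. f i) a = (\<Sum>i\<in>S. f i a)"
  by (induction S rule: infinite_finite_induct) auto

lemma linear_functional_xsum: "linear_functional (\<lambda>x. xsum x F)"
  unfolding Vector_Spaces.linear_iff using V.vector_space_axioms R.vector_space_axioms
  by (auto simp: xsum_def sum.distrib sum_distrib_left)

lemma separating_functional:
  assumes "v \<notin> V.span G"
  obtains f where "linear_functional f" "\<forall>g\<in>G. f g = 0" "f v = 1"
proof -
  obtain B where B: "B \<subseteq> G" "V.independent B" "G \<subseteq> V.span B"
    by (rule V.basis_exists)
  have v_B: "v \<notin> V.span B"
    using assms V.span_mono[OF B(1)] by blast
  then have ind: "V.independent (insert v B)"
    using B(2) by (rule V.independent_insertI)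
  define f where "f = VR.construct (insert v B) (\<lambda>b. if b = v then 1 else 0)"
  have lin: "linear_functional f"
    unfolding f_def using ind by (rule VR.linear_construct)
  have f_basis: "f b = (if b = v then 1 else 0)" if "b \<in> insert v B" for b
    unfolding f_def using ind that by (rule VR.construct_basis)
  have "f b = 0" if "b \<in> B" for b
    using f_basis[of b] that v_B V.span_base by auto
  then have "\<forall>g\<in>G. f g = 0"
    using VR.linear_eq_0_on_span[OF lin] B(3) by blast
  moreover have "f v = 1"
    using f_basis[of v] by simp
  ultimately show thesis
    using lin that by blast
qed

lemma card_independent_le_dim:
  assumes "finite E" "W \<subseteq> V.span E" "V.independent B" "B \<subseteq> V.span W"
  shows "card B \<le> V.dim W"
proof -
  obtain C where C: "C \<subseteq> W" "V.independent C" "W \<subseteq> V.span C" "card C = V.dim W"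
    by (rule V.basis_exists)
  have "finite C"
    using V.independent_span_bound[OF assms(1) C(2)] C(1) assms(2) by blast
  moreover have "B \<subseteq> V.span C"
    using assms(4) V.span_minimal[OF C(3) V.subspace_span] by blast
  ultimately have "card B \<le> card C"
    using V.independent_span_bound[OF _ assms(3)] by blast
  with C(4) show ?thesis
    by simp
qed

lemma dim_insert_notin_span:
  assumes "finite E" "S \<subseteq> V.span E" "d \<notin> V.span S"
  shows "V.dim (insert d S) = V.dim S + 1"
proof -
  obtain C where C: "C \<subseteq> S" "V.independent C" "S \<subseteq> V.span C" "card C = V.dim S"
    by (rule V.basis_exists)
  have "finite C"
    using V.independent_span_bound[OF assms(1) C(2)] C(1) assms(2) by blast
  have "d \<notin> V.span C"
    using assms(3) V.span_mono[OF C(1)] by blast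
  then have "d \<notin> C" "V.independent (insert d C)"
    using V.span_base C(2) V.independent_insertI by blast+
  moreover have "V.span (insert d C) = V.span (insert d S)"
    unfolding V.span_eq using C(1,3) V.span_mono[of C "insert d C"]
    by (auto intro: V.span_base)
  ultimately have "V.dim (insert d S) = card (insert d C)"
    by (intro V.dim_eq_card) auto
  with \<open>finite C\<close> \<open>d \<notin> C\<close> C(4) show ?thesis
    by simp
qed

section \<open>Affine dimension\<close>

definition independent_family :: "nat \<Rightarrow> (nat \<Rightarrow> point) \<Rightarrow> bool" where
  "independent_family k b \<longleftrightarrow>
     (\<forall>u. (\<Sum>i<k. scale_point (u i) (b i)) = 0 \<longrightarrow> (\<forall>i<k. u i = 0))"

lemma independent_family_iff:
  "independent_family k b \<longleftrightarrow> inj_on b {..<k} \<and> V.independent (b ` {..<k})"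
proof
  assume indep: "independent_family k b"
  have inj: "inj_on b {..<k}"
  proof (rule inj_onI, rule ccontr)
    fix i l assume il: "i \<in> {..<k}" "l \<in> {..<k}" "b i = b l" "i \<noteq> l"
    define u where "u t = (if t = i then 1 else if t = l then -1 else 0 :: real)" for t
    have "(\<Sum>t<k. scale_point (u t) (b t)) = b i - b l"
      using il by (simp add: fun_eq_iff sum_apply u_def if_distrib[of "\<lambda>c. c * _"]
          sum.If_cases Int_insert_left)
    then have "u i = 0"
      using indep il unfolding independent_family_def by auto
    then show False
      by (simp add: u_def)
  qed
  have "V.independent (b ` {..<k})"
  proof (rule V.independent_if_scalars_zero)
    fix f x assume sum0: "(\<Sum>x\<in>b ` {..<k}. scale_point (f x) x) = 0" and x: "x \<in> b ` {..<k}"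
    have "(\<Sum>i<k. scale_point (f (b i)) (b i)) = 0"
      using sum0 sum.reindex[OF inj, of "\<lambda>x. scale_point (f x) x"] by simp
    then show "f x = 0"
      using indep x unfolding independent_family_def by auto
  qed simp
  with inj show "inj_on b {..<k} \<and> V.independent (b ` {..<k})" ..
next
  assume "inj_on b {..<k} \<and> V.independent (b ` {..<k})"
  then have inj: "inj_on b {..<k}" and indep: "V.independent (b ` {..<k})" by auto
  show "independent_family k b"
    unfolding independent_family_def
  proof (intro allI impI)
    fix u i assume sum0: "(\<Sum>i<k. scale_point (u i) (b i)) = 0" and i: "i < k"
    define f where "f x = u (the_inv_into {..<k} b x)" for x
    have "(\<Sum>x\<in>b ` {..<k}. scale_point (f x) x) = (\<Sum>i<k. scale_point (u i) (b i))"
      by (simp add: sum.reindex[OF inj] f_def the_inv_into_f_f[OF inj])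
    then have "f (b i) = 0"
      using V.independentD[OF indep, of "b ` {..<k}"] sum0 i by simp
    then show "u i = 0"
      using i by (simp add: f_def the_inv_into_f_f[OF inj])
  qed
qed

lemma affine_combination_split:
  fixes c :: "nat \<Rightarrow> real" and v :: "nat \<Rightarrow> point"
  shows "(\<Sum>t\<le>k. c t * v t a) =
     (\<Sum>t\<le>k. c t) * v 0 a + (\<Sum>i<k. c (Suc i) * (v (Suc i) a - v 0 a))"
  by (simp add: sum.atMost_shift distrib_right right_diff_distrib sum_subtractf sum_distrib_right)

lemma aff_indep_iff_independent_family:
  "aff_indep k v \<longleftrightarrow> independent_family k (\<lambda>i. v (Suc i) - v 0)"
proof
  assume aff: "aff_indep k v"
  show "independent_family k (\<lambda>i. v (Suc i) - v 0)"
    unfolding independent_family_def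
  proof (intro allI impI)
    fix u i assume sum0: "(\<Sum>i<k. scale_point (u i) (v (Suc i) - v 0)) = 0" and i: "i < k"
    define c where "c t = (if t = 0 then - (\<Sum>i<k. u i) else u (t - 1))" for t
    have "(\<Sum>t\<le>k. c t) = 0"
      by (simp add: sum.atMost_shift c_def)
    moreover have "(\<Sum>t\<le>k. c t * v t a) = 0" for a
      using fun_cong[OF sum0, of a]
      by (simp add: affine_combination_split \<open>(\<Sum>t\<le>k. c t) = 0\<close> sum_apply) (simp add: c_def)
    ultimately have "c (Suc i) = 0"
      using aff i unfolding aff_indep_def by auto
    then show "u i = 0"
      by (simp add: c_def)
  qed
next
  assume indep: "independent_family k (\<lambda>i. v (Suc i) - v 0)"
  show "aff_indep k v"
    unfolding aff_indep_def
  proof (intro allI impI)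
    fix c t assume c: "(\<Sum>t\<le>k. c t) = 0 \<and> (\<forall>a. (\<Sum>t\<le>k. c t * v t a) = 0)" and t: "t \<le> k"
    then have "(\<Sum>i<k. scale_point (c (Suc i)) (v (Suc i) - v 0)) = 0"
      by (auto simp: fun_eq_iff sum_apply affine_combination_split)
    then have c_Suc: "c (Suc i) = 0" if "i < k" for i
      using indep that unfolding independent_family_def
      by (auto dest: spec[where x = "\<lambda>i. c (Suc i)"])
    show "c t = 0"
    proof (cases t)
      case 0
      then show ?thesis
        using c c_Suc by (simp add: sum.atMost_shift)
    next
      case (Suc i)
      then show ?thesis
        using c_Suc t by simp
    qed
  qed
qed

lemma adim_eq_dim_translate:
  assumes E: "finite E" "(\<lambda>x. x - x0) ` S \<subseteq> V.span E" and x0: "x0 \<in> S"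
  shows "adim S = int (V.dim ((\<lambda>x. x - x0) ` S))"
proof -
  let ?D = "(\<lambda>x. x - x0) ` S"
  have upper: "k \<le> V.dim ?D" if v: "\<forall>i\<le>k. v i \<in> S" and aff: "aff_indep k v" for k v
  proof -
    let ?b = "\<lambda>i. v (Suc i) - v 0"
    have inj: "inj_on ?b {..<k}" and indep: "V.independent (?b ` {..<k})"
      using aff by (simp_all add: aff_indep_iff_independent_family independent_family_iff)
    have "?b i \<in> V.span ?D" if "i < k" for i
    proof -
      have "v (Suc i) - x0 \<in> V.span ?D" "v 0 - x0 \<in> V.span ?D"
        using v that by (auto intro: V.span_base)
      then have "(v (Suc i) - x0) - (v 0 - x0) \<in> V.span ?D"
        by (rule V.span_diff)
      then show ?thesis
        by simp
    qed
    then have "card (?b ` {..<k}) \<le> V.dim ?D"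
      by (intro card_independent_le_dim[OF E indep]) auto
    with inj show ?thesis
      by (simp add: card_image)
  qed
  have attained: "\<exists>v. (\<forall>i\<le>V.dim ?D. v i \<in> S) \<and> aff_indep (V.dim ?D) v"
  proof -
    obtain C where C: "C \<subseteq> ?D" "V.independent C" "card C = V.dim ?D"
      by (rule V.basis_exists)
    have "finite C"
      using V.independent_span_bound[OF E(1) C(2)] C(1) E(2) by blast
    then obtain g where g: "bij_betw g {..<V.dim ?D} C"
      using ex_bij_betw_nat_finite C(3) by (metis lessThan_atLeast0)
    define v where "v i = (if i = 0 then x0 else g (i - 1) + x0)" for i
    have "v i \<in> S" if "i \<le> V.dim ?D" for i
    proof (cases i)
      case (Suc l)
      then have "g l \<in> ?D"
        using g C(1) that bij_betw_apply by fastforce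
      then show ?thesis
        using Suc by (auto simp: v_def)
    qed (simp add: v_def x0)
    moreover have "aff_indep (V.dim ?D) v"
      using g C(2) by (simp add: aff_indep_iff_independent_family independent_family_iff
          v_def bij_betw_def)
    ultimately show ?thesis
      by blast
  qed
  have "(GREATEST k. \<exists>v. (\<forall>i\<le>k. v i \<in> S) \<and> aff_indep k v) = V.dim ?D"
    by (rule Greatest_equality) (use attained upper in blast)+
  with x0 show ?thesis
    unfolding adim_def by auto
qed

section \<open>Faces of convex hulls\<close>

lemma mem_conv_hull: "x \<in> S \<Longrightarrow> x \<in> conv_hull S"
  unfolding conv_hull_def
  by (rule CollectI, rule exI[of _ 1], rule exI[of _ "\<lambda>_. 1"], rule exI[of _ "\<lambda>_. x"]) auto

lemma conv_hull_xsum_le: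
  assumes "\<forall>s\<in>S. xsum s F \<le> b" "x \<in> conv_hull S"
  shows "xsum x F \<le> b"
proof -
  obtain k :: nat and c v where c: "\<forall>i<k. c i \<ge> 0 \<and> v i \<in> S" "(\<Sum>i<k. c i) = 1"
    and x: "x = (\<lambda>a. \<Sum>i<k. c i * v i a)"
    using assms(2) unfolding conv_hull_def by blast
  have "xsum x F = (\<Sum>i<k. c i * xsum (v i) F)"
    unfolding x xsum_def by (subst sum.swap) (simp add: sum_distrib_left)
  also have "\<dots> \<le> (\<Sum>i<k. c i * b)"
    using c(1) assms(1) by (intro sum_mono mult_left_mono) auto
  also have "\<dots> = b"
    using c(2) by (simp add: sum_distrib_right[symmetric])
  finally show ?thesis .
qed

lemma conv_hull_translate_in_span:
  assumes "x \<in> conv_hull S" "\<forall>s\<in>S. s - x0 \<in> V.span W"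
  shows "x - x0 \<in> V.span W"
proof -
  obtain k :: nat and c v where c: "\<forall>i<k. c i \<ge> 0 \<and> v i \<in> S" "(\<Sum>i<k. c i) = 1"
    and x: "x = (\<lambda>a. \<Sum>i<k. c i * v i a)"
    using assms(1) unfolding conv_hull_def by blast
  have "x - x0 = (\<Sum>i<k. scale_point (c i) (v i - x0))"
    using c(2) by (simp add: x fun_eq_iff sum_apply right_diff_distrib sum_subtractf
        sum_distrib_right[symmetric])
  also have "\<dots> \<in> V.span W"
    using c(1) assms(2) by (intro V.span_sum V.span_scale) auto
  finally show ?thesis .
qed

lemma conv_hull_subset_span: "S \<subseteq> V.span E \<Longrightarrow> conv_hull S \<subseteq> V.span E"
  using conv_hull_translate_in_span[of _ S 0 E] by auto

lemma diff_notin_span_level_set: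
  assumes lin: "linear_functional \<phi>" and "\<forall>x\<in>F. \<phi> x = b" "x0 \<in> F" "\<phi> y \<noteq> b"
  shows "y - x0 \<notin> V.span ((\<lambda>x. x - x0) ` F)"
proof
  have "\<phi> z = 0" if "z \<in> (\<lambda>x. x - x0) ` F" for z
    using that VR.linear_diff[OF lin] assms(2,3) by auto
  moreover assume "y - x0 \<in> V.span ((\<lambda>x. x - x0) ` F)"
  ultimately have "\<phi> (y - x0) = 0"
    using VR.linear_eq_0_on_span[OF lin] by blast
  with VR.linear_diff[OF lin] assms(2-4) show False
    by simp
qed

lemma adim_face_of_conv_hull:
  assumes E: "finite E" "S \<subseteq> V.span E"
    and lin: "linear_functional \<phi>"
    and T: "T \<subseteq> S" "\<forall>t\<in>T. \<phi> t = b" "x0 \<in> T"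
    and y: "y \<in> S" "\<phi> y \<noteq> b"
    and spanning: "\<forall>s\<in>S. s - x0 \<in> V.span (insert (y - x0) ((\<lambda>t. t - x0) ` T))"
  shows "adim {x \<in> conv_hull S. \<phi> x = b} = adim (conv_hull S) - 1"
proof -
  define P where "P = conv_hull S"
  define F where "F = {x \<in> P. \<phi> x = b}"
  let ?tr = "\<lambda>A. (\<lambda>x. x - x0) ` A"
  have "T \<subseteq> F" "x0 \<in> F" "y \<in> P"
    using T y unfolding F_def P_def by (auto intro: mem_conv_hull)
  have P_E: "?tr P \<subseteq> V.span E"
    using conv_hull_subset_span[OF E(2)] \<open>T \<subseteq> F\<close> \<open>x0 \<in> F\<close>
    unfolding F_def P_def by (auto intro: V.span_diff)
  have F_P: "?tr F \<subseteq> ?tr P"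
    unfolding F_def by auto
  have "?tr P \<subseteq> V.span (insert (y - x0) (?tr T))"
    using conv_hull_translate_in_span spanning unfolding P_def by blast
  also have "\<dots> \<subseteq> V.span (insert (y - x0) (?tr F))"
    using \<open>T \<subseteq> F\<close> by (intro V.span_mono) auto
  finally have "V.span (?tr P) = V.span (insert (y - x0) (?tr F))"
    using F_P \<open>y \<in> P\<close> V.span_superset[of "?tr P"] unfolding V.span_eq by blast
  then have "V.dim (?tr P) = V.dim (insert (y - x0) (?tr F))"
    by (rule V.span_eq_dim)
  also have "\<dots> = V.dim (?tr F) + 1"
    using dim_insert_notin_span[OF E(1)] diff_notin_span_level_set[OF lin _ \<open>x0 \<in> F\<close> y(2)]
      F_P P_E unfolding F_def by auto
  finally show ?thesis
    using adim_eq_dim_translate[OF E(1) P_E] adim_eq_dim_translate[OF E(1) _ \<open>x0 \<in> F\<close>]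
      \<open>x0 \<in> F\<close> F_P P_E unfolding F_def P_def by auto
qed

section \<open>Paths and their incidence vectors\<close>

definition internal_seq :: "nat \<Rightarrow> nat \<Rightarrow> nat list \<Rightarrow> bool" where
  "internal_seq n p xs \<longleftrightarrow> distinct xs \<and> set xs \<subseteq> {1..<n} \<and> length xs = p - 1"

definition path_point :: "nat \<Rightarrow> nat list \<Rightarrow> point" where
  "path_point n xs = incidence (path_arcs (0 # xs @ [n]))"

definition path_points :: "nat \<Rightarrow> nat \<Rightarrow> point set" where
  "path_points n p = path_point n ` Collect (internal_seq n p)"

definition path_points_through :: "nat \<Rightarrow> nat \<Rightarrow> nat \<Rightarrow> point set" where
  "path_points_through n p j = path_point n ` {xs. internal_seq n p xs \<and> j \<in> set xs}"

lemma distinct_path_vertices: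
  assumes "2 \<le> p" "internal_seq n p xs"
  shows "distinct (0 # xs @ [n])"
proof -
  have "xs \<noteq> []"
    using assms unfolding internal_seq_def by auto
  then have "hd xs \<in> {1..<n}"
    using assms hd_in_set unfolding internal_seq_def by blast
  with assms show ?thesis
    unfolding internal_seq_def by auto
qed

lemma internal_seq_of_is_p_path:
  assumes "1 \<le> p" "is_p_path n p vs"
  obtains xs where "vs = 0 # xs @ [n]" "internal_seq n p xs"
proof -
  have len: "length vs = p + 1" and dist: "distinct vs" and "hd vs = 0" "last vs = n"
    and arc: "\<forall>i<p. (vs ! i, vs ! Suc i) \<in> arcs n"
    using assms(2) unfolding is_p_path_def by auto
  have "vs = 0 # tl vs" "tl vs \<noteq> []"
    using \<open>hd vs = 0\<close> len assms(1) by (cases vs; auto)+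
  then obtain xs where vs: "vs = 0 # xs @ [n]"
    using \<open>last vs = n\<close> by (metis append_butlast_last_id last_ConsR)
  have "x \<in> {1..<n}" if "x \<in> set xs" for x
  proof -
    obtain k where k: "k < length xs" "xs ! k = x"
      using \<open>x \<in> set xs\<close> by (auto simp: in_set_conv_nth)
    then have "(x, vs ! Suc (Suc k)) \<in> arcs n"
      using arc len vs by (auto simp: nth_append dest: spec[of _ "Suc k"])
    moreover have "x \<noteq> 0 \<and> x \<noteq> n"
      using dist vs that by (cases x) auto
    ultimately show ?thesis
      unfolding arcs_def by auto
  qed
  with vs len dist show thesis
    by (intro that[OF vs]) (auto simp: internal_seq_def)
qed

lemma is_p_path_of_internal_seq:
  assumes "2 \<le> p" "internal_seq n p xs"
  shows "is_p_path n p (0 # xs @ [n])"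
proof -
  let ?vs = "0 # xs @ [n]"
  have len: "length ?vs = p + 1"
    using assms unfolding internal_seq_def by auto
  have dist: "distinct ?vs"
    using distinct_path_vertices[OF assms] .
  have sub: "set ?vs \<subseteq> {..n}"
    using assms(2) unfolding internal_seq_def by auto
  have "(?vs ! i, ?vs ! Suc i) \<in> arcs n" if "i < p" for i
  proof -
    have i: "i < length ?vs" "Suc i < length ?vs" "0 < length ?vs" "p < length ?vs"
      using that len by auto
    have first: "?vs ! 0 = 0" and final: "?vs ! p = n"
      using len by (auto simp: nth_append)
    have "?vs ! i \<le> n" "?vs ! Suc i \<le> n"
      using sub i nth_mem by (metis atMost_iff subsetD)+
    moreover have "?vs ! i \<noteq> ?vs ! Suc i"
      using nth_eq_iff_index_eq[OF dist i(1,2)] by simp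
    moreover have "?vs ! Suc i \<noteq> 0"
      using nth_eq_iff_index_eq[OF dist i(2,3)] first by simp
    moreover have "?vs ! i \<noteq> n"
      using nth_eq_iff_index_eq[OF dist i(1,4)] final that by simp
    moreover have "?vs ! i \<noteq> 0 \<or> ?vs ! Suc i \<noteq> n"
      using nth_eq_iff_index_eq[OF dist i(1,3)] nth_eq_iff_index_eq[OF dist i(2,4)] first final
        assms(1)
      by auto
    ultimately show ?thesis
      unfolding arcs_def by auto
  qed
  with len dist show ?thesis
    unfolding is_p_path_def by (simp add: last_append)
qed

lemma is_p_path_iff_internal_seq:
  assumes "2 \<le> p"
  shows "is_p_path n p vs \<longleftrightarrow> (\<exists>xs. vs = 0 # xs @ [n] \<and> internal_seq n p xs)"
  using assms internal_seq_of_is_p_path[of p n vs] is_p_path_of_internal_seq[of p n]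
  by (metis one_le_numeral order_trans)

lemma path_polytope_eq:
  assumes "2 \<le> p"
  shows "path_polytope n p = conv_hull (path_points n p)"
proof -
  have "{incidence (path_arcs vs) | vs. is_p_path n p vs} = path_points n p"
    unfolding is_p_path_iff_internal_seq[OF assms] path_points_def path_point_def by blast
  then show ?thesis
    unfolding path_polytope_def by simp
qed

lemma path_arcs_subset_arcs:
  assumes "is_p_path n p vs"
  shows "path_arcs vs \<subseteq> arcs n"
proof
  fix e assume "e \<in> path_arcs vs"
  then obtain i where i: "i < length vs - 1" "e = (vs ! i, vs ! Suc i)"
    unfolding path_arcs_def by (auto simp: set_zip nth_tl)
  moreover have "length vs = p + 1"
    using assms unfolding is_p_path_def by simp
  ultimately show "e \<in> arcs n"
    using assms unfolding is_p_path_def by auto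
qed

lemma finite_arcs: "finite (arcs n)"
proof -
  have "arcs n \<subseteq> {..n} \<times> {..n}"
    unfolding arcs_def by auto
  then show ?thesis
    by (rule finite_subset) simp
qed

lemma incidence_eq_sum: "finite F \<Longrightarrow> incidence F = (\<Sum>a\<in>F. incidence {a})"
  by (simp add: fun_eq_iff sum_apply incidence_def)

lemma incidence_in_span:
  assumes "finite F" "F \<subseteq> A"
  shows "incidence F \<in> V.span ((\<lambda>a. incidence {a}) ` A)"
  unfolding incidence_eq_sum[OF assms(1)]
  using assms(2) by (intro V.span_sum V.span_base) auto

fun walk_weight :: "(nat \<times> nat \<Rightarrow> real) \<Rightarrow> nat list \<Rightarrow> real" where
  "walk_weight w (x # y # zs) = w (x, y) + walk_weight w (y # zs)"
| "walk_weight w _ = 0"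

lemma walk_weight_eq_sum:
  "distinct vs \<Longrightarrow> walk_weight w vs = (\<Sum>a\<in>path_arcs vs. w a)"
proof (induction w vs rule: walk_weight.induct)
  case (1 w x y zs)
  have "(x, y) \<notin> set (zip (y # zs) zs)"
    using "1.prems" by (auto dest: set_zip_leftD)
  with 1 show ?case
    by (simp add: path_arcs_def)
qed (auto simp: path_arcs_def)

lemma walk_weight_Cons:
  "vs \<noteq> [] \<Longrightarrow> walk_weight w (x # vs) = w (x, hd vs) + walk_weight w vs"
  by (cases vs) auto

lemma walk_weight_append:
  "us \<noteq> [] \<Longrightarrow> vs \<noteq> [] \<Longrightarrow>
     walk_weight w (us @ vs) = walk_weight w us + w (last us, hd vs) + walk_weight w vs"
proof (induction us)
  case (Cons u us)
  then show ?case
    by (cases us) (auto simp: walk_weight_Cons)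
qed simp

lemma walk_weight_out_indicator:
  "distinct vs \<Longrightarrow>
     walk_weight (\<lambda>a. if fst a = j then 1 else 0) vs = (if j \<in> set (butlast vs) then 1 else 0)"
proof (induction "\<lambda>a::nat \<times> nat. if fst a = j then (1::real) else 0" vs rule: walk_weight.induct)
  case (1 x y zs)
  then show ?case
    by (cases "x = j") (auto dest: in_set_butlastD)
qed auto

lemma linear_functional_path_point:
  assumes "linear_functional f" "2 \<le> p" "internal_seq n p xs"
  shows "f (path_point n xs) = walk_weight (\<lambda>a. f (incidence {a})) (0 # xs @ [n])"
proof -
  have "path_point n xs = (\<Sum>a\<in>path_arcs (0 # xs @ [n]). incidence {a})"
    unfolding path_point_def by (rule incidence_eq_sum) (simp add: path_arcs_def)
  then show ?thesis
    using distinct_path_vertices[OF assms(2,3)]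
    by (simp add: VR.linear_sum[OF assms(1)] walk_weight_eq_sum)
qed

lemma xsum_delta_out_path_point:
  assumes "2 \<le> p" "j \<in> {1..<n}" "internal_seq n p xs"
  shows "xsum (path_point n xs) (delta_out n j) = (if j \<in> set xs then 1 else 0)"
proof -
  let ?vs = "0 # xs @ [n]"
  have "path_arcs ?vs \<subseteq> arcs n"
    using assms is_p_path_iff_internal_seq path_arcs_subset_arcs by blast
  then have "delta_out n j \<inter> path_arcs ?vs = path_arcs ?vs \<inter> {a. fst a = j}"
    unfolding delta_out_def by auto
  have "finite (delta_out n j)" "finite (path_arcs ?vs)"
    using finite_arcs by (auto simp: delta_out_def path_arcs_def)
  have "xsum (path_point n xs) (delta_out n j)
      = (\<Sum>a\<in>delta_out n j. if a \<in> path_arcs ?vs then 1 else 0)"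
    unfolding xsum_def path_point_def incidence_def ..
  also have "\<dots> = (\<Sum>a\<in>delta_out n j \<inter> path_arcs ?vs. 1)"
    by (rule sum.inter_restrict[OF \<open>finite (delta_out n j)\<close>, symmetric])
  also have "\<dots> = (\<Sum>a\<in>path_arcs ?vs \<inter> {a. fst a = j}. 1)"
    using \<open>delta_out n j \<inter> path_arcs ?vs = _\<close> by simp
  also have "\<dots> = (\<Sum>a\<in>path_arcs ?vs. if fst a = j then 1 else 0)"
    using sum.inter_restrict[OF \<open>finite (path_arcs ?vs)\<close>, of "\<lambda>_. 1::real" "{a. fst a = j}"]
    by simp
  also have "\<dots> = (if j \<in> set (butlast ?vs) then 1 else 0)"
    using distinct_path_vertices[OF assms(1,3)]
    by (simp add: walk_weight_eq_sum[symmetric] walk_weight_out_indicator)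
  finally show ?thesis
    using assms(2) by (simp add: butlast_append)
qed

lemma internal_list_avoiding:
  assumes "r + length L \<le> n - 1"
  obtains mid where "length mid = r" "distinct mid" "set mid \<subseteq> {1..<n}" "set mid \<inter> set L = {}"
proof -
  have "card {1..<n} - card (set L) \<le> card ({1..<n} - set L)"
    by (rule diff_card_le_card_Diff) simp
  moreover have "card (set L) \<le> length L"
    by (rule card_length)
  ultimately have "r \<le> card ({1..<n} - set L)"
    using assms by simp
  then obtain T where T: "T \<subseteq> {1..<n} - set L" "card T = r"
    by (meson obtain_subset_with_card_n)
  then have "finite T"
    using finite_subset by blast
  with T show thesis
    by (intro that[of "sorted_list_of_set T"]) auto
qed

lemma internal_seq_through:
  assumes "2 \<le> p" "p < n" "j \<in> {1..<n}"
  obtains xs where "internal_seq n p xs" "j \<in> set xs"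
proof -
  have "p - 2 + length [j] \<le> n - 1"
    using assms by simp
  then obtain mid where "length mid = p - 2" "distinct mid" "set mid \<subseteq> {1..<n}" "j \<notin> set mid"
    by (rule internal_list_avoiding) auto
  with assms show thesis
    using that[of "j # mid"] unfolding internal_seq_def by auto
qed

lemma internal_seq_avoiding:
  assumes "1 \<le> p" "p < n"
  obtains ys where "internal_seq n p ys" "j \<notin> set ys"
proof -
  have "p - 1 + length [j] \<le> n - 1"
    using assms by simp
  then obtain mid where "length mid = p - 1" "distinct mid" "set mid \<subseteq> {1..<n}" "j \<notin> set mid"
    by (rule internal_list_avoiding) auto
  then show thesis
    using that[of mid] unfolding internal_seq_def by auto
qed

section \<open>Arc weights that are constant on the paths through j\<close>

lemma walk_weight_potential:
  assumes pot: "\<And>x y. x \<in> A \<Longrightarrow> y \<in> A \<Longrightarrow> x \<noteq> y \<Longrightarrow> w (x, y) = c + \<phi> y - \<phi> x"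
    and "distinct zs" "set zs \<subseteq> A" "zs \<noteq> []"
  shows "walk_weight w zs = (real (length zs) - 1) * c + \<phi> (last zs) - \<phi> (hd zs)"
  using assms(2-4)
proof (induction zs)
  case (Cons z zs)
  show ?case
  proof (cases zs)
    case (Cons y ys)
    then have "w (z, y) = c + \<phi> y - \<phi> z"
      using Cons.prems by (intro pot) auto
    with Cons Cons.IH Cons.prems show ?thesis
      by (auto simp: algebra_simps)
  qed simp
qed simp

locale constant_weight_through_j =
  fixes n p j :: nat and w :: "nat \<times> nat \<Rightarrow> real" and K :: real
  assumes p_ge_4: "4 \<le> p" and p_less_n: "p < n" and j_internal: "j \<in> {1..<n}"
    and weight_through_j:
      "\<And>xs. internal_seq n p xs \<Longrightarrow> j \<in> set xs \<Longrightarrow> walk_weight w (0 # xs @ [n]) = K"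
begin

abbreviation other_nodes :: "nat set" where
  "other_nodes \<equiv> {1..<n} - {j}"

lemma exchange_vertex:
  assumes "internal_seq n p (pre @ x # suf)" "j \<in> set (pre @ suf)"
    and "x' \<in> {1..<n}" "x' \<notin> set (pre @ x # suf)"
  shows "w (last (0 # pre), x) + w (x, hd (suf @ [n])) =
         w (last (0 # pre), x') + w (x', hd (suf @ [n]))"
proof -
  have "internal_seq n p (pre @ x' # suf)"
    using assms unfolding internal_seq_def by auto
  have split: "walk_weight w (0 # (pre @ y # suf) @ [n]) =
      walk_weight w (0 # pre) + (w (last (0 # pre), y) + w (y, hd (suf @ [n])))
      + walk_weight w (suf @ [n])" for y
    using walk_weight_append[of "0 # pre" "y # suf @ [n]" w] walk_weight_Cons[of "suf @ [n]" w y]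
    by simp
  show ?thesis
    using weight_through_j[OF assms(1)] weight_through_j[OF \<open>internal_seq n p (pre @ x' # suf)\<close>]
      assms(2) split[of x] split[of x']
    by simp
qed

lemma fresh_nodes:
  assumes "length L \<le> p"
  obtains mid where "length mid + length L = p" "distinct mid" "set mid \<subseteq> {1..<n}"
    "set mid \<inter> set L = {}"
proof -
  have "p - length L + length L \<le> n - 1"
    using assms p_less_n by simp
  with assms that show thesis
    by (metis internal_list_avoiding le_add_diff_inverse2)
qed

lemma exchange_first:
  assumes "x \<in> other_nodes" "x' \<in> other_nodes" "z \<in> other_nodes" "distinct [x, x', z]"
  shows "w (0, x) + w (x, z) = w (0, x') + w (x', z)"
proof -
  have "length [x, x', z, j] \<le> p"
    using p_ge_4 by simp
  then obtain mid where mid: "length mid + length [x, x', z, j] = p" "distinct mid"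
    "set mid \<subseteq> {1..<n}" "set mid \<inter> set [x, x', z, j] = {}"
    by (rule fresh_nodes)
  show ?thesis
    using exchange_vertex[of "[]" x "z # j # mid" x'] assms mid j_internal p_ge_4
    by (auto simp: internal_seq_def)
qed

lemma exchange_into_j:
  assumes "x \<in> other_nodes" "x' \<in> other_nodes" "x \<noteq> x'"
  shows "w (0, x) + w (x, j) = w (0, x') + w (x', j)"
proof -
  have "length [x, x', j] \<le> p"
    using p_ge_4 by simp
  then obtain mid where mid: "length mid + length [x, x', j] = p" "distinct mid"
    "set mid \<subseteq> {1..<n}" "set mid \<inter> set [x, x', j] = {}"
    by (rule fresh_nodes)
  show ?thesis
    using exchange_vertex[of "[]" x "j # mid" x'] assms mid j_internal p_ge_4
    by (auto simp: internal_seq_def)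
qed

lemma exchange_before_j:
  assumes "a \<in> other_nodes" "x \<in> other_nodes" "x' \<in> other_nodes" "distinct [a, x, x']"
  shows "w (a, x) + w (x, j) = w (a, x') + w (x', j)"
proof -
  have "length [a, x, x', j] \<le> p"
    using p_ge_4 by simp
  then obtain mid where mid: "length mid + length [a, x, x', j] = p" "distinct mid"
    "set mid \<subseteq> {1..<n}" "set mid \<inter> set [a, x, x', j] = {}"
    by (rule fresh_nodes)
  show ?thesis
    using exchange_vertex[of "[a]" x "j # mid" x'] assms mid j_internal p_ge_4
    by (auto simp: internal_seq_def)
qed

lemma exchange_last:
  assumes "a \<in> other_nodes" "x \<in> other_nodes" "x' \<in> other_nodes" "distinct [a, x, x']"
  shows "w (a, x) + w (x, n) = w (a, x') + w (x', n)"
proof -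
  have "length [a, x, x', j] \<le> p"
    using p_ge_4 by simp
  then obtain mid where mid: "length mid + length [a, x, x', j] = p" "distinct mid"
    "set mid \<subseteq> {1..<n}" "set mid \<inter> set [a, x, x', j] = {}"
    by (rule fresh_nodes)
  show ?thesis
    using exchange_vertex[of "j # mid @ [a]" x "[]" x'] assms mid j_internal p_ge_4
    by (auto simp: internal_seq_def)
qed

lemma third_node:
  obtains a where "a \<in> other_nodes" "a \<noteq> y" "a \<noteq> v"
proof -
  have "card other_nodes = n - 2"
    using j_internal by simp
  moreover have "card {y, v} \<le> 2"
    by (simp add: card_insert_if)
  ultimately have "card other_nodes - card {y, v} > 0"
    using p_ge_4 p_less_n by simp
  then have "card (other_nodes - {y, v}) > 0"
    using diff_card_le_card_Diff[of "{y, v}" other_nodes] by simp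
  then have "other_nodes - {y, v} \<noteq> {}"
    by (metis card.empty less_irrefl)
  then show thesis
    using that by blast
qed

lemma potential_form:
  obtains \<nu> where
    "\<And>x y. x \<in> other_nodes \<Longrightarrow> y \<in> other_nodes \<Longrightarrow> x \<noteq> y \<Longrightarrow> w (x, y) = \<nu> + w (0, y) - w (0, x)"
proof -
  define D where "D x y = w (x, y) + w (0, x) - w (0, y)" for x y
  have D_left: "D x z = D x' z"
    if "x \<in> other_nodes" "x' \<in> other_nodes" "z \<in> other_nodes" "distinct [x, x', z]" for x x' z
    using exchange_first[OF that] by (simp add: D_def)
  have D_right: "D a x = D a x'"
    if "a \<in> other_nodes" "x \<in> other_nodes" "x' \<in> other_nodes" "distinct [a, x, x']" for a x x'
    using exchange_before_j[OF that] exchange_into_j[of x x'] that by (simp add: D_def)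
  have D_const: "D x y = D u v"
    if "x \<in> other_nodes" "y \<in> other_nodes" "u \<in> other_nodes" "v \<in> other_nodes" "x \<noteq> y" "u \<noteq> v"
    for x y u v
  proof -
    obtain a where a: "a \<in> other_nodes" "a \<noteq> y" "a \<noteq> v"
      by (rule third_node)
    have "D x y = D a y"
      using D_left[of x a y] that a by (cases "x = a") auto
    also have "\<dots> = D a v"
      using D_right[of a y v] that a by (cases "y = v") auto
    also have "\<dots> = D u v"
      using D_left[of a u v] that a by (cases "a = u") auto
    finally show ?thesis .
  qed
  obtain u where u: "u \<in> other_nodes"
    using third_node by blast
  obtain v where v: "v \<in> other_nodes" "v \<noteq> u"
    using third_node by blast
  have "w (x, y) = D u v + w (0, y) - w (0, x)"
    if "x \<in> other_nodes" "y \<in> other_nodes" "x \<noteq> y" for x y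
    using D_const[OF that(1,2) u v(1) that(3) v(2)[symmetric]] by (simp add: D_def)
  then show thesis
    by (rule that)
qed

lemma last_arc_balance:
  assumes "x \<in> other_nodes" "x' \<in> other_nodes"
  shows "w (0, x) + w (x, n) = w (0, x') + w (x', n)"
proof (cases "x = x'")
  case False
  obtain \<nu> where pot: "\<And>x y. x \<in> other_nodes \<Longrightarrow> y \<in> other_nodes \<Longrightarrow> x \<noteq> y \<Longrightarrow>
      w (x, y) = \<nu> + w (0, y) - w (0, x)"
    using potential_form by blast
  obtain a where a: "a \<in> other_nodes" "a \<noteq> x" "a \<noteq> x'"
    by (rule third_node)
  show ?thesis
    using exchange_last[of a x x'] pot[of a x] pot[of a x'] a assms False by simp
qed simp

theorem weight_avoiding_j_eq:
  assumes "internal_seq n p xs" "j \<notin> set xs" "internal_seq n p ys" "j \<notin> set ys"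
  shows "walk_weight w (0 # xs @ [n]) = walk_weight w (0 # ys @ [n])"
proof -
  obtain \<nu> where pot: "\<And>x y. x \<in> other_nodes \<Longrightarrow> y \<in> other_nodes \<Longrightarrow> x \<noteq> y \<Longrightarrow>
      w (x, y) = \<nu> + w (0, y) - w (0, x)"
    using potential_form by blast
  have weight: "walk_weight w (0 # zs @ [n]) = (real p - 2) * \<nu> + (w (0, last zs) + w (last zs, n))"
    and last_zs: "last zs \<in> other_nodes"
    if "internal_seq n p zs" "j \<notin> set zs" for zs
  proof -
    have zs: "zs \<noteq> []" "distinct zs" "set zs \<subseteq> other_nodes" "length zs = p - 1"
      using that p_ge_4 unfolding internal_seq_def by auto
    then show "last zs \<in> other_nodes"
      using last_in_set by blast
    have "walk_weight w (0 # zs @ [n]) = w (0, hd zs) + walk_weight w zs + w (last zs, n)"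
      using walk_weight_Cons[of "zs @ [n]" w 0] walk_weight_append[of zs "[n]" w] zs(1) by simp
    also have "walk_weight w zs = (real (length zs) - 1) * \<nu> + w (0, last zs) - w (0, hd zs)"
      using walk_weight_potential[of other_nodes w \<nu> "\<lambda>y. w (0, y)"] pot zs(1-3) by blast
    finally show "walk_weight w (0 # zs @ [n]) = (real p - 2) * \<nu> + (w (0, last zs) + w (last zs, n))"
      using zs(4) p_ge_4 by (simp add: of_nat_diff)
  qed
  show ?thesis
    using weight[OF assms(1,2)] weight[OF assms(3,4)]
      last_arc_balance[OF last_zs[OF assms(1,2)] last_zs[OF assms(3,4)]]
    by simp
qed

end

section \<open>The facet\<close>

lemma path_points_subset_span:
  assumes "2 \<le> p"
  shows "path_points n p \<subseteq> V.span ((\<lambda>a. incidence {a}) ` arcs n)"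
proof
  fix x assume "x \<in> path_points n p"
  then obtain xs where xs: "internal_seq n p xs" "x = path_point n xs"
    unfolding path_points_def by blast
  then have "path_arcs (0 # xs @ [n]) \<subseteq> arcs n"
    using assms is_p_path_iff_internal_seq path_arcs_subset_arcs by blast
  then show "x \<in> V.span ((\<lambda>a. incidence {a}) ` arcs n)"
    unfolding xs(2) path_point_def by (intro incidence_in_span) (simp_all add: path_arcs_def)
qed

lemma path_point_diff_in_span:
  assumes "4 \<le> p" "p < n" "j \<in> {1..<n}" "x0 \<in> path_points_through n p j"
    and "internal_seq n p xs" "j \<notin> set xs" "internal_seq n p ys" "j \<notin> set ys"
  shows "path_point n xs - path_point n ys \<in> V.span ((\<lambda>t. t - x0) ` path_points_through n p j)"
proof (rule ccontr)
  assume "path_point n xs - path_point n ys \<notin> V.span ((\<lambda>t. t - x0) ` path_points_through n p j)"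
  then obtain f where f: "linear_functional f" "\<forall>g\<in>(\<lambda>t. t - x0) ` path_points_through n p j. f g = 0"
    "f (path_point n xs - path_point n ys) = 1"
    by (rule separating_functional)
  define w where "w = (\<lambda>a. f (incidence {a}))"
  have weight: "f (path_point n zs) = walk_weight w (0 # zs @ [n])" if "internal_seq n p zs" for zs
    using linear_functional_path_point[OF f(1) _ that] assms(1) by (simp add: w_def)
  interpret constant_weight_through_j n p j w "f x0"
  proof
    fix zs assume zs: "internal_seq n p zs" "j \<in> set zs"
    then have "f (path_point n zs - x0) = 0"
      using f(2) unfolding path_points_through_def by blast
    then show "walk_weight w (0 # zs @ [n]) = f x0"
      using weight[OF zs(1)] VR.linear_diff[OF f(1)] by simp
  qed (use assms in auto)
  have "f (path_point n xs) = f (path_point n ys)"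
    using weight_avoiding_j_eq[OF assms(5-8)] weight assms(5,7) by simp
  then show False
    using f(3) VR.linear_diff[OF f(1)] by simp
qed

lemma path_points_translate_in_span:
  assumes "4 \<le> p" "p < n" "j \<in> {1..<n}" "x0 \<in> path_points_through n p j"
    and "internal_seq n p ys" "j \<notin> set ys"
  shows "\<forall>s\<in>path_points n p.
    s - x0 \<in> V.span (insert (path_point n ys - x0) ((\<lambda>t. t - x0) ` path_points_through n p j))"
proof
  let ?B = "insert (path_point n ys - x0) ((\<lambda>t. t - x0) ` path_points_through n p j)"
  fix s assume "s \<in> path_points n p"
  then obtain xs where xs: "internal_seq n p xs" "s = path_point n xs"
    unfolding path_points_def by blast
  show "s - x0 \<in> V.span ?B"
  proof (cases "j \<in> set xs")
    case True
    then have "s - x0 \<in> ?B"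
      using xs unfolding path_points_through_def by blast
    then show ?thesis
      by (rule V.span_base)
  next
    case False
    then have "s - path_point n ys \<in> V.span ?B"
      using path_point_diff_in_span[OF assms(1-4) xs(1) False assms(5,6)] xs(2)
        V.span_mono[of _ ?B] by blast
    moreover have "path_point n ys - x0 \<in> V.span ?B"
      by (rule V.span_base) simp
    ultimately have "(s - path_point n ys) + (path_point n ys - x0) \<in> V.span ?B"
      by (rule V.span_add)
    then show ?thesis
      by simp
  qed
qed

lemma path_polytope_valid:
  assumes "2 \<le> p" "j \<in> {1..<n}"
  shows "\<forall>x\<in>path_polytope n p. xsum x (delta_out n j) \<le> 1"
proof -
  have "\<forall>s\<in>path_points n p. xsum s (delta_out n j) \<le> 1"
    unfolding path_points_def using xsum_delta_out_path_point[OF assms] by simp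
  then show ?thesis
    unfolding path_polytope_eq[OF assms(1)] using conv_hull_xsum_le by blast
qed

lemma path_polytope_face_adim:
  assumes p: "4 \<le> p" "p < n" "j \<in> {1..<n}"
  shows "adim {x \<in> path_polytope n p. xsum x (delta_out n j) = 1} = adim (path_polytope n p) - 1"
proof -
  have "2 \<le> p" "1 \<le> p"
    using p by simp_all
  note out = xsum_delta_out_path_point[OF \<open>2 \<le> p\<close> p(3)]
  obtain xs where xs: "internal_seq n p xs" "j \<in> set xs"
    using internal_seq_through[OF \<open>2 \<le> p\<close> p(2,3)] by blast
  obtain ys where ys: "internal_seq n p ys" "j \<notin> set ys"
    using internal_seq_avoiding[OF \<open>1 \<le> p\<close> p(2)] by blast
  show ?thesis
    unfolding path_polytope_eq[OF \<open>2 \<le> p\<close>]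
  proof (rule adim_face_of_conv_hull)
    show "finite ((\<lambda>a. incidence {a}) ` arcs n)"
      using finite_arcs by simp
    show "path_points n p \<subseteq> V.span ((\<lambda>a. incidence {a}) ` arcs n)"
      using path_points_subset_span \<open>2 \<le> p\<close> by simp
    show "path_points_through n p j \<subseteq> path_points n p"
      unfolding path_points_def path_points_through_def by blast
    show "\<forall>t\<in>path_points_through n p j. xsum t (delta_out n j) = 1"
      unfolding path_points_through_def using out by simp
    show "path_point n xs \<in> path_points_through n p j"
      unfolding path_points_through_def using xs by blast
    show "path_point n ys \<in> path_points n p" "xsum (path_point n ys) (delta_out n j) \<noteq> 1"
      unfolding path_points_def using ys out[OF ys(1)] by auto
    show "\<forall>s\<in>path_points n p. s - path_point n xs \<in> V.span (insert (path_point n ys - path_point n xs)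
        ((\<lambda>t. t - path_point n xs) ` path_points_through n p j))"
      using path_points_translate_in_span[OF p _ ys] \<open>path_point n xs \<in> _\<close> by blast
  qed (rule linear_functional_xsum)
qed

theorem theorem11:
  fixes n p j :: nat
  assumes "4 \<le> p" and "p \<le> n - 1" and "1 \<le> j" and "j \<le> n - 1"
  shows "(\<forall>x\<in>path_polytope n p. xsum x (delta_out n j) \<le> 1) \<and>
         facet_defining (path_polytope n p) (delta_out n j) 1"
proof -
  have p: "4 \<le> p" "p < n" "j \<in> {1..<n}"
    using assms by auto
  then have "\<forall>x\<in>path_polytope n p. xsum x (delta_out n j) \<le> 1"
    by (intro path_polytope_valid) simp_all
  with path_polytope_face_adim[OF p] show ?thesis
    unfolding facet_defining_def by blast
qed

end
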